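(* Let $g$ be a semi-consistent piece-wise quadratic function with breakpoints $-\infty=\tau_0<\tau_1<\dots<\tau_N=+\infty$ and pieces $p_1,\dots,p_N$. For any $1\le k<l\le N$, the pieces $k$ and $l$ have at most one feasible common tangent.
   Context: A continuous $g$ is piece-wise quadratic with $N$ pieces if $g=p_k$ on $[\tau_{k-1},\tau_k]$ for quadratic $p_k$ with $p_k\ne p_{k+1}$. Indexing function of piece-wise quadratic $h$ with strongly convex pieces: $I_h(\beta)=\min\{k:\exists\,\alpha^\star\in\arg\max_\alpha\{\beta\alpha-h(\alpha)\},\ \tau_{k-1}\le\alpha^\star\le\tau_k\}$. $g$ is semi-consistent if: (i) all $p_k$ are strongly convex; (ii) $p_k(\alpha)\le\min\{p_{k-1}(\alpha),p_{k+1}(\alpha)\}$ for $\alpha\in[\tau_{k-1},\tau_k]$, $2\le k\le N-1$; (iii) for every $k\le N$, $I_{g_k}$ is non-decreasing, where $g_k=g$ on $(-\infty,\tau_k]$ and $g_k=p_k$ on $(\tau_k,\infty)$. For $1\le k<l\le N$, a feasible common tangent to pieces $k$ and $l$ is a slope $s\in\mathbb{R}$ such that some line $\ell(\alpha)=s\alpha+b$ is tangent to $p_k$ at some $\alpha_k\in[\tau_{k-1},\tau_k]$ and tangent to $p_l$ at some $\alpha_l\in[\tau_{l-1},\tau_l]$ (i.e. $\ell(\alpha_k)=p_k(\alpha_k)$, $p_k'(\alpha_k)=s$, $\ell(\alpha_l)=p_l(\alpha_l)$, $p_l'(\alpha_l)=s$). *)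

theory Defs
  imports "HOL-Analysis.Analysis" "HOL-Library.Extended_Real"
begin

definition quadratic :: "(real \<Rightarrow> real) \<Rightarrow> bool" where
  "quadratic f \<longleftrightarrow> (\<exists>a b c. \<forall>x. f x = a * x\<^sup>2 + b * x + c)"

definition strongly_convex :: "(real \<Rightarrow> real) \<Rightarrow> bool" where
  "strongly_convex f \<longleftrightarrow> (\<exists>m>0. convex_on UNIV (\<lambda>x. f x - m / 2 * x\<^sup>2))"

definition in_piece :: "(nat \<Rightarrow> ereal) \<Rightarrow> nat \<Rightarrow> real \<Rightarrow> bool" where
  "in_piece tau k x \<longleftrightarrow> tau (k - 1) \<le> ereal x \<and> ereal x \<le> tau k"

definition pw_quadratic ::
  "(real \<Rightarrow> real) \<Rightarrow> nat \<Rightarrow> (nat \<Rightarrow> ereal) \<Rightarrow> (nat \<Rightarrow> real \<Rightarrow> real) \<Rightarrow> bool" where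
  "pw_quadratic g N tau p \<longleftrightarrow>
     N \<ge> 1 \<and> continuous_on UNIV g \<and>
     tau 0 = -\<infinity> \<and> tau N = \<infinity> \<and> (\<forall>k<N. tau k < tau (Suc k)) \<and>
     (\<forall>k\<in>{1..N}. quadratic (p k)) \<and>
     (\<forall>k\<in>{1..N}. \<forall>x. in_piece tau k x \<longrightarrow> g x = p k x) \<and>
     (\<forall>k. 1 \<le> k \<and> k < N \<longrightarrow> p k \<noteq> p (Suc k))"

definition index_fun ::
  "(real \<Rightarrow> real) \<Rightarrow> nat \<Rightarrow> (nat \<Rightarrow> ereal) \<Rightarrow> real \<Rightarrow> nat" where
  "index_fun h M tau \<beta> = (LEAST k. 1 \<le> k \<and> k \<le> M \<and>
      (\<exists>a. (\<forall>x. \<beta> * x - h x \<le> \<beta> * a - h a) \<and> in_piece tau k a))"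

text \<open>g_k: equal to g on (-inf, tau k] and to p k on (tau k, inf); it is piecewise
  quadratic with pieces p 1..p k and breakpoints tau 0, ..., tau (k-1), +inf.\<close>
definition trunc_fun ::
  "(real \<Rightarrow> real) \<Rightarrow> (nat \<Rightarrow> ereal) \<Rightarrow> (nat \<Rightarrow> real \<Rightarrow> real) \<Rightarrow> nat \<Rightarrow> real \<Rightarrow> real" where
  "trunc_fun g tau p k x = (if ereal x \<le> tau k then g x else p k x)"

definition semi_consistent ::
  "(real \<Rightarrow> real) \<Rightarrow> nat \<Rightarrow> (nat \<Rightarrow> ereal) \<Rightarrow> (nat \<Rightarrow> real \<Rightarrow> real) \<Rightarrow> bool" where
  "semi_consistent g N tau p \<longleftrightarrow>
     pw_quadratic g N tau p \<and>
     (\<forall>k\<in>{1..N}. strongly_convex (p k)) \<and>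
     (\<forall>k. 2 \<le> k \<and> k \<le> N - 1 \<longrightarrow>
        (\<forall>x. in_piece tau k x \<longrightarrow> p k x \<le> min (p (k - 1) x) (p (Suc k) x))) \<and>
     (\<forall>k\<in>{1..N}. mono (index_fun (trunc_fun g tau p k) k (tau(k := \<infinity>))))"

definition feasible_common_tangent ::
  "(nat \<Rightarrow> ereal) \<Rightarrow> (nat \<Rightarrow> real \<Rightarrow> real) \<Rightarrow> nat \<Rightarrow> nat \<Rightarrow> real \<Rightarrow> bool" where
  "feasible_common_tangent tau p k l s \<longleftrightarrow>
     (\<exists>b ak al. in_piece tau k ak \<and> in_piece tau l al \<and>
        s * ak + b = p k ak \<and> deriv (p k) ak = s \<and>
        s * al + b = p l al \<and> deriv (p l) al = s)"

end

theory Submission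
  imports Defs
begin

text \<open>Eliminating intercepts and slopes from two common tangents of different slopes, with
  contact points a1, a2 and b1, b2, gives a1 + a2 = b1 + b2; together with the ordering this
  forces all contact points to coincide, hence also the slopes. Pieces k < l have contact
  points ordered this way because the breakpoints increase.\<close>

lemma deriv_quadratic:
  fixes f :: "real \<Rightarrow> real"
  assumes "\<forall>x. f x = a * x\<^sup>2 + b * x + c"
  shows "deriv f x = 2 * a * x + b"
proof -
  have "f = (\<lambda>x. a * x\<^sup>2 + b * x + c)" using assms by auto
  moreover have "((\<lambda>x. a * x\<^sup>2 + b * x + c) has_real_derivative 2 * a * x + b) (at x)"
    by (auto intro!: derivative_eq_intros)
  ultimately show ?thesis by (simp add: DERIV_imp_deriv)
qed

lemma quadratic_common_tangents_contact_sum: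
  fixes A B C A' B' C' s1 s2 a1 a2 b1 b2 c1 c2 :: real
  assumes "s1 = 2 * A * a1 + B" "s1 * a1 + c1 = A * a1\<^sup>2 + B * a1 + C"
    and "s2 = 2 * A * a2 + B" "s2 * a2 + c2 = A * a2\<^sup>2 + B * a2 + C"
    and "s1 = 2 * A' * b1 + B'" "s1 * b1 + c1 = A' * b1\<^sup>2 + B' * b1 + C'"
    and "s2 = 2 * A' * b2 + B'" "s2 * b2 + c2 = A' * b2\<^sup>2 + B' * b2 + C'"
    and "s1 \<noteq> s2"
  shows "a1 + a2 = b1 + b2"
proof -
  have "c1 = C - A * a1 * a1"
    using assms(1,2) by (simp add: algebra_simps power2_eq_square)
  moreover have "c2 = C - A * a2 * a2"
    using assms(3,4) by (simp add: algebra_simps power2_eq_square)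
  moreover have "c1 = C' - A' * b1 * b1"
    using assms(5,6) by (simp add: algebra_simps power2_eq_square)
  moreover have "c2 = C' - A' * b2 * b2"
    using assms(7,8) by (simp add: algebra_simps power2_eq_square)
  ultimately have "A * a2 * a2 - A * a1 * a1 = A' * b2 * b2 - A' * b1 * b1" by linarith
  then have "A * (a2 - a1) * (a2 + a1) = A' * (b2 - b1) * (b2 + b1)"
    by (simp add: algebra_simps)
  moreover have "A * (a2 - a1) = A' * (b2 - b1)"
    using assms(1,3,5,7) by (simp add: algebra_simps)
  moreover have "A * (a2 - a1) \<noteq> 0"
    using assms(1,3,9) by (simp add: algebra_simps)
  ultimately show ?thesis by simp
qed

lemma quadratic_common_tangent_unique:
  fixes f h :: "real \<Rightarrow> real"
  assumes "quadratic f" "quadratic h"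
    and "s1 * a1 + c1 = f a1" "deriv f a1 = s1" "s1 * b1 + c1 = h b1" "deriv h b1 = s1"
    and "s2 * a2 + c2 = f a2" "deriv f a2 = s2" "s2 * b2 + c2 = h b2" "deriv h b2 = s2"
    and "max a1 a2 \<le> min b1 b2"
  shows "s1 = s2"
proof (rule ccontr)
  assume "s1 \<noteq> s2"
  obtain A B C where f: "\<forall>x. f x = A * x\<^sup>2 + B * x + C"
    using assms(1) unfolding quadratic_def by blast
  obtain A' B' C' where h: "\<forall>x. h x = A' * x\<^sup>2 + B' * x + C'"
    using assms(2) unfolding quadratic_def by blast
  have "a1 + a2 = b1 + b2"
    by (rule quadratic_common_tangents_contact_sum[of s1 A a1 B c1 C s2 a2 c2 A' b1 B' C' b2])
      (use assms(3-10) f h deriv_quadratic[OF f] deriv_quadratic[OF h] \<open>s1 \<noteq> s2\<close> in auto)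
  with assms(11) have "a1 = a2" by linarith
  with assms(4,8) \<open>s1 \<noteq> s2\<close> show False by simp
qed

lemma pw_quadratic_breakpoints_mono:
  assumes "pw_quadratic g N tau p" "i \<le> j" "j \<le> N"
  shows "tau i \<le> tau j"
  using assms(2,3)
proof (induction j rule: dec_induct)
  case base
  then show ?case by simp
next
  case (step n)
  then have "tau n < tau (Suc n)" using assms(1) unfolding pw_quadratic_def by simp
  with step show ?case by simp
qed

theorem lemma9:
  fixes g :: "real \<Rightarrow> real" and N :: nat and tau :: "nat \<Rightarrow> ereal"
    and p :: "nat \<Rightarrow> real \<Rightarrow> real" and k l :: nat
  assumes "semi_consistent g N tau p"
    and "1 \<le> k" and "k < l" and "l \<le> N"
  shows "\<forall>s1 s2. feasible_common_tangent tau p k l s1 \<and> feasible_common_tangent tau p k l s2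
           \<longrightarrow> s1 = s2"
proof (intro allI impI)
  fix s1 s2
  assume "feasible_common_tangent tau p k l s1 \<and> feasible_common_tangent tau p k l s2"
  then obtain c1 a1 b1 c2 a2 b2 where
    t1: "in_piece tau k a1" "in_piece tau l b1"
      "s1 * a1 + c1 = p k a1" "deriv (p k) a1 = s1" "s1 * b1 + c1 = p l b1" "deriv (p l) b1 = s1"
    and t2: "in_piece tau k a2" "in_piece tau l b2"
      "s2 * a2 + c2 = p k a2" "deriv (p k) a2 = s2" "s2 * b2 + c2 = p l b2" "deriv (p l) b2 = s2"
    unfolding feasible_common_tangent_def by blast
  have pw: "pw_quadratic g N tau p" using assms(1) unfolding semi_consistent_def by simp
  then have "quadratic (p k)" "quadratic (p l)"
    using assms(2-4) unfolding pw_quadratic_def by auto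
  moreover have "tau k \<le> tau (l - 1)"
    using pw_quadratic_breakpoints_mono[OF pw, of k "l - 1"] assms(3,4) by simp
  then have "a \<le> b" if "ereal a \<le> tau k" "tau (l - 1) \<le> ereal b" for a b
    using that by (metis ereal_less_eq(3) order_trans)
  then have "max a1 a2 \<le> min b1 b2"
    using t1(1,2) t2(1,2) unfolding in_piece_def by auto
  ultimately show "s1 = s2"
    using quadratic_common_tangent_unique t1(3-6) t2(3-6) by blast
qed

end
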